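(* Let $q(x)=q_0+2q_1x+q_2x^2$ and let $(g_+,J_+,\omega_+)=(g_+^{(q)},J_+^{(q)},\omega_+^{(q)})$ be the regular positive ambitoric Kähler structure given below with functions $A,B$. Then, locally, $(g_+^{(q)},\omega_+^{(q)},J_+^{(q)})$ is a CR $f_q$-twist of the orthotoric Kähler structure $(g_+^{(1)},\omega_+^{(1)},J_+^{(1)})$ (the same ansatz with $q\equiv1$ and the same $A,B$), where $f_q(x_1,x_2)=q_0+q_1(x_1+x_2)+q_2x_1x_2>0$ is a Killing potential of $g_+^{(1)}$.
   Context: Regular positive ambitoric ansatz: coordinates $x_1>x_2$, $\tau_0,\tau_1,\tau_2$ with $2q_1\tau_1=q_0\tau_2+q_2\tau_0$; $A,B$ positive functions of one variable, $f_q>0$; $g_+=\frac{x_1-x_2}{f_q(x_1,x_2)}\Big(\frac{dx_1^2}{A(x_1)}+\frac{dx_2^2}{B(x_2)}+A(x_1)\alpha_1^2+B(x_2)\alpha_2^2\Big)$, $\omega_+=\frac{x_1-x_2}{f_q}(dx_1\wedge\alpha_1+dx_2\wedge\alpha_2)$, $J_+dx_1=A(x_1)\alpha_1$, $J_+dx_2=B(x_2)\alpha_2$, with $\alpha_1=\frac{d\tau_0+2x_2d\tau_1+x_2^2d\tau_2}{(x_1-x_2)f_q}$, $\alpha_2=\frac{d\tau_0+2x_1d\tau_1+x_1^2d\tau_2}{(x_1-x_2)f_q}$. For $q\equiv1$ this is an orthotoric metric. CR twist: given Kähler $(M,g,J,\omega)$ and a positive Killing potential $f$, let $(N,\mathscr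 D,J,\chi)$ be the local Sasaki manifold over $M$ (circle bundle with connection form $\eta$, $d\eta=\pi^*\omega$, $\mathscr D=\ker\eta$, $J$ lifted, $\chi$ the class of the circle generator); a CR $f$-twist is a Sasaki–Reeb quotient of $N$ by the Sasaki structure $f\chi$, i.e. the leaf space of the Reeb field of $\eta/f$ with Kähler structure induced by $d(\eta/f)|_{\mathscr D}$ and $J$. *)

theory Defs
  imports "HOL-Analysis.Analysis"
begin

text \<open>Coordinates on the ambitoric chart: a point p of real^5 has
  p$1 = x1, p$2 = x2, p$3 = tau0, p$4 = tau1, p$5 = tau2.
  The quadratic q(x) = q0 + 2 q1 x + q2 x^2 is given by (q0,q1,q2);
  q = 1 (orthotoric case) is (q0,q1,q2) = (1,0,0).\<close>

definition fq :: "real \<Rightarrow> real \<Rightarrow> real \<Rightarrow> real \<Rightarrow> real \<Rightarrow> real" where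
  "fq q0 q1 q2 x1 x2 = q0 + q1 * (x1 + x2) + q2 * x1 * x2"

text \<open>The linear constraint 2 q1 tau1 = q0 tau2 + q2 tau0 (on points and on
  tangent vectors).\<close>
definition tang :: "real \<Rightarrow> real \<Rightarrow> real \<Rightarrow> real^5 \<Rightarrow> bool" where
  "tang q0 q1 q2 v \<longleftrightarrow> 2 * q1 * v$4 = q0 * v$5 + q2 * v$3"

definition amb_dom :: "real \<Rightarrow> real \<Rightarrow> real \<Rightarrow> (real \<Rightarrow> real) \<Rightarrow> (real \<Rightarrow> real) \<Rightarrow> real^5 \<Rightarrow> bool" where
  "amb_dom q0 q1 q2 A B p \<longleftrightarrow> p$1 > p$2 \<and> tang q0 q1 q2 p \<and> fq q0 q1 q2 (p$1) (p$2) > 0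
     \<and> A (p$1) > 0 \<and> B (p$2) > 0"

definition alpha1 :: "real \<Rightarrow> real \<Rightarrow> real \<Rightarrow> real^5 \<Rightarrow> real^5 \<Rightarrow> real" where
  "alpha1 q0 q1 q2 p v = (v$3 + 2 * p$2 * v$4 + (p$2)^2 * v$5) / ((p$1 - p$2) * fq q0 q1 q2 (p$1) (p$2))"

definition alpha2 :: "real \<Rightarrow> real \<Rightarrow> real \<Rightarrow> real^5 \<Rightarrow> real^5 \<Rightarrow> real" where
  "alpha2 q0 q1 q2 p v = (v$3 + 2 * p$1 * v$4 + (p$1)^2 * v$5) / ((p$1 - p$2) * fq q0 q1 q2 (p$1) (p$2))"

definition wedge :: "('a \<Rightarrow> real) \<Rightarrow> ('a \<Rightarrow> real) \<Rightarrow> 'a \<Rightarrow> 'a \<Rightarrow> real" where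
  "wedge a b v w = a v * b w - a w * b v"

definition omega_amb :: "real \<Rightarrow> real \<Rightarrow> real \<Rightarrow> real^5 \<Rightarrow> real^5 \<Rightarrow> real^5 \<Rightarrow> real" where
  "omega_amb q0 q1 q2 p v w = (p$1 - p$2) / fq q0 q1 q2 (p$1) (p$2) *
     (wedge (\<lambda>u. u$1) (alpha1 q0 q1 q2 p) v w + wedge (\<lambda>u. u$2) (alpha2 q0 q1 q2 p) v w)"

definition g_amb :: "real \<Rightarrow> real \<Rightarrow> real \<Rightarrow> (real \<Rightarrow> real) \<Rightarrow> (real \<Rightarrow> real) \<Rightarrow> real^5 \<Rightarrow> real^5 \<Rightarrow> real^5 \<Rightarrow> real" where
  "g_amb q0 q1 q2 A B p v w = (p$1 - p$2) / fq q0 q1 q2 (p$1) (p$2) *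
     (v$1 * w$1 / A (p$1) + v$2 * w$2 / B (p$2)
      + A (p$1) * alpha1 q0 q1 q2 p v * alpha1 q0 q1 q2 p w
      + B (p$2) * alpha2 q0 q1 q2 p v * alpha2 q0 q1 q2 p w)"

text \<open>J_+ on tangent vectors, "u' = J_+ u", determined by J_+ dx1 = A alpha1,
  J_+ dx2 = B alpha2 (hence J_+ alpha1 = -dx1/A, J_+ alpha2 = -dx2/B), with the
  convention (J phi)(X) = - phi(J X) for the action on 1-forms.\<close>
definition J_amb :: "real \<Rightarrow> real \<Rightarrow> real \<Rightarrow> (real \<Rightarrow> real) \<Rightarrow> (real \<Rightarrow> real) \<Rightarrow> real^5 \<Rightarrow> real^5 \<Rightarrow> real^5 \<Rightarrow> bool" where
  "J_amb q0 q1 q2 A B p u u' \<longleftrightarrow> tang q0 q1 q2 u'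
     \<and> u'$1 = - A (p$1) * alpha1 q0 q1 q2 p u
     \<and> u'$2 = - B (p$2) * alpha2 q0 q1 q2 p u
     \<and> alpha1 q0 q1 q2 p u' = u$1 / A (p$1)
     \<and> alpha2 q0 q1 q2 p u' = u$2 / B (p$2)"

text \<open>Exterior derivative of a 1-form (evaluated on constant vector fields).\<close>
definition d1form :: "('a::real_normed_vector \<Rightarrow> 'a \<Rightarrow> real) \<Rightarrow> 'a \<Rightarrow> 'a \<Rightarrow> 'a \<Rightarrow> real" where
  "d1form th p v w = frechet_derivative (\<lambda>x. th x w) (at p) v - frechet_derivative (\<lambda>x. th x v) (at p) w"

text \<open>Lie derivative of a symmetric 2-tensor g along a vector field K,
  evaluated on constant vector fields.\<close>
definition lie2 :: "('a::real_normed_vector \<Rightarrow> 'a \<Rightarrow> 'a \<Rightarrow> real) \<Rightarrow> ('a \<Rightarrow> 'a) \<Rightarrow> 'a \<Rightarrow> 'a \<Rightarrow> 'a \<Rightarrow> real" where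
  "lie2 g K p v w = frechet_derivative (\<lambda>x. g x v w) (at p) (K p)
     + g p (frechet_derivative K (at p) v) w + g p v (frechet_derivative K (at p) w)"

text \<open>f is a Killing potential of the Kaehler structure (g, omega) on the
  region U (tangent vectors: those satisfying T): its symplectic gradient
  K = J grad f (characterised by omega(K, .) = - df) is a Killing field.\<close>
definition killing_potential ::
  "('a::real_normed_vector \<Rightarrow> bool) \<Rightarrow> 'a set \<Rightarrow> ('a \<Rightarrow> 'a \<Rightarrow> 'a \<Rightarrow> real) \<Rightarrow> ('a \<Rightarrow> 'a \<Rightarrow> 'a \<Rightarrow> real)
     \<Rightarrow> ('a \<Rightarrow> real) \<Rightarrow> bool" where
  "killing_potential T U om g f \<longleftrightarrow>
    (\<exists>K. \<forall>p\<in>U. T (K p) \<and> f differentiable (at p)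
        \<and> (\<forall>w. T w \<longrightarrow> om p (K p) w = - frechet_derivative f (at p) w)
        \<and> K differentiable (at p)
        \<and> (\<forall>v w. (\<lambda>x. g x v w) differentiable (at p))
        \<and> (\<forall>v w. T v \<longrightarrow> T w \<longrightarrow> lie2 g K p v w = 0))"

text \<open>The base Kaehler manifold has points satisfying Base,
  tangent vectors satisfying T1, Kaehler form om1 and complex structure J1
  (given as a relation "J1 p u u' iff u' = J1 u").  The local Sasaki manifold
  N over it is (a relatively open part of) Base x R, with contact form
  eta = dt + theta, d theta = om1, D = ker eta, J lifted horizontally to D.
  The CR f-twist is the leaf space of the Reeb field of eta/f with the Kaehler
  structure induced by d(eta/f)|_D and J; here it is realised locally by a
  submersion pi whose fibres are tangent exactly to the Reeb field, and it is
  required to coincide with the target structure (Target, T2, om2, J2) near p0.\<close>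
definition cr_twist_at ::
  "('a::real_normed_vector \<Rightarrow> bool) \<Rightarrow> ('a \<Rightarrow> bool) \<Rightarrow> ('a \<Rightarrow> 'a \<Rightarrow> 'a \<Rightarrow> real) \<Rightarrow> ('a \<Rightarrow> 'a \<Rightarrow> 'a \<Rightarrow> bool)
   \<Rightarrow> ('a \<Rightarrow> real)
   \<Rightarrow> ('b::real_normed_vector \<Rightarrow> bool) \<Rightarrow> ('b \<Rightarrow> bool) \<Rightarrow> ('b \<Rightarrow> 'b \<Rightarrow> 'b \<Rightarrow> real) \<Rightarrow> ('b \<Rightarrow> 'b \<Rightarrow> 'b \<Rightarrow> bool)
   \<Rightarrow> 'b \<Rightarrow> bool" where
  "cr_twist_at Base T1 om1 J1 f Target T2 om2 J2 p0 \<longleftrightarrow>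
    (\<exists>(th :: 'a \<Rightarrow> 'a \<Rightarrow> real) (O' :: ('a \<times> real) set) (pi :: 'a \<times> real \<Rightarrow> 'b) Dpi.
      let TN = (\<lambda>v. T1 (fst v));
          eta = (\<lambda>y v. snd v + th (fst y) (fst v));
          D = (\<lambda>y v. TN v \<and> eta y v = 0);
          beta = (\<lambda>y v. eta y v / f (fst y));
          Ov = {y \<in> O'. Base (fst y)}
      in open O' \<and> p0 \<in> pi ` Ov \<and>
      (\<forall>y\<in>Ov.
         f (fst y) > 0 \<and> f differentiable (at (fst y))
       \<and> linear (th (fst y)) \<and> (\<forall>w. (\<lambda>x. th x w) differentiable (at (fst y)))
       \<and> (\<forall>v w. T1 v \<longrightarrow> T1 w \<longrightarrow> d1form th (fst y) v w = om1 (fst y) v w)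
       \<and> Target (pi y)
       \<and> (pi has_derivative Dpi y) (at y)
       \<and> (\<forall>v. TN v \<longrightarrow> T2 (Dpi y v))
       \<and> (\<forall>u. T2 u \<longrightarrow> (\<exists>v. TN v \<and> Dpi y v = u))
       \<and> (\<exists>xi. TN xi \<and> beta y xi = 1 \<and> (\<forall>w. TN w \<longrightarrow> d1form beta y xi w = 0)
              \<and> (\<forall>v. TN v \<longrightarrow> (Dpi y v = 0 \<longleftrightarrow> (\<exists>c. v = c *\<^sub>R xi))))
       \<and> (\<forall>v w. D y v \<longrightarrow> D y w \<longrightarrow> d1form beta y v w = om2 (pi y) (Dpi y v) (Dpi y w))
       \<and> (\<forall>v w. D y v \<longrightarrow> D y w \<longrightarrow> J1 (fst y) (fst v) (fst w) \<longrightarrow> J2 (pi y) (Dpi y v) (Dpi y w))))"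

end

theory Submission
  imports Defs
begin

text \<open>
  On the orthotoric chart tau2 is constant and omega^(1) = d theta with
  theta = (x1 + x2) d tau0 + 2 x1 x2 d tau1.  Hence f_q has the constant symplectic gradient
  K = q1 d/d tau0 + (q2/2) d/d tau1, which is Killing because g^(1) depends on x1, x2 only.
  On M x R with contact form eta = dt + theta, the Reeb field of eta/f_q is xi = (K, q0):
  eta(xi) = f_q and d(eta/f_q)(xi, -) = (d theta(K, -) f_q + f_q df_q)/f_q^2 = 0.
  The linear map (x, tau0, tau1, t) |-> (x, q0 tau0 - q1 t, q0 tau1 - (q2/2) t, 2 q1 tau1 - q2 tau0)
  kills exactly the multiples of xi (its kernel equations say that (tau0, tau1, t) has zero
  cross product with (q1, q2/2, q0)), maps onto the constraint 2 q1 tau1 = q0 tau2 + q2 tau0, and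
  pulls alpha_i^(q) back to alpha_i^(1) on ker eta.  So on ker eta the twisted form
  d(eta/f_q) = omega^(1)/f_q is the pull-back of omega^(q), and J^(1) goes to J^(q).
\<close>

lemma exhaust_5:
  fixes x :: 5
  shows "x = 1 \<or> x = 2 \<or> x = 3 \<or> x = 4 \<or> x = 5"
proof (induct x)
  case (of_int z)
  then have "z = 0 \<or> z = 1 \<or> z = 2 \<or> z = 3 \<or> z = 4" by fastforce
  then show ?case by auto
qed

lemma forall_5: "(\<forall>i::5. P i) \<longleftrightarrow> P 1 \<and> P 2 \<and> P 3 \<and> P 4 \<and> P 5"
  by (metis exhaust_5)

lemma vec5_eq_iff:
  "(x::'a^5) = y \<longleftrightarrow> x$1 = y$1 \<and> x$2 = y$2 \<and> x$3 = y$3 \<and> x$4 = y$4 \<and> x$5 = y$5"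
  by (simp add: vec_eq_iff forall_5)

lemmas has_derivative_vec_nth [derivative_intros] =
  bounded_linear.has_derivative[OF bounded_linear_vec_nth]

lemma tang_orthotoric_iff [simp]: "tang 1 0 0 v \<longleftrightarrow> v$5 = 0"
  by (simp add: tang_def)

section \<open>Exterior derivatives\<close>

lemma d1form_eq_derivatives:
  assumes "\<And>u. ((\<lambda>x. \<eta> x u) has_derivative D\<eta> u) (at y)"
  shows "d1form \<eta> y v w = D\<eta> w v - D\<eta> v w"
  by (simp add: d1form_def frechet_derivative_at[OF assms, symmetric])

lemma d1form_divide:
  fixes \<eta> :: "'a::real_normed_vector \<Rightarrow> 'a \<Rightarrow> real"
  assumes \<eta>: "\<And>u. ((\<lambda>x. \<eta> x u) has_derivative D\<eta> u) (at y)"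
    and f: "(f has_derivative Df) (at y)" and nz: "f y \<noteq> 0"
  shows "d1form (\<lambda>x u. \<eta> x u / f x) y v w
       = (d1form \<eta> y v w * f y - \<eta> y w * Df v + \<eta> y v * Df w) / (f y)^2"
proof -
  have "((\<lambda>x. \<eta> x u / f x) has_derivative (\<lambda>h. (D\<eta> u h * f y - \<eta> y u * Df h) / (f y * f y))) (at y)"
    for u using has_derivative_divide'[OF \<eta> f nz] .
  then have "d1form (\<lambda>x u. \<eta> x u / f x) y v w
      = (D\<eta> w v * f y - \<eta> y w * Df v) / (f y * f y) - (D\<eta> v w * f y - \<eta> y v * Df w) / (f y * f y)"
    by (rule d1form_eq_derivatives)
  also have "\<dots> = ((D\<eta> w v - D\<eta> v w) * f y - \<eta> y w * Df v + \<eta> y v * Df w) / (f y)^2"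
    by (simp add: power2_eq_square diff_divide_distrib add_divide_distrib algebra_simps)
  also have "D\<eta> w v - D\<eta> v w = d1form \<eta> y v w"
    using \<eta> by (rule d1form_eq_derivatives[symmetric])
  finally show ?thesis .
qed

lemma frechet_derivative_translation_invariant:
  fixes f :: "'a::real_normed_vector \<Rightarrow> 'b::real_normed_vector"
  assumes "f differentiable (at p)" and "\<And>x t. f (x + t *\<^sub>R k) = f x"
  shows "frechet_derivative f (at p) k = 0"
proof -
  let ?D = "frechet_derivative f (at p)"
  have "((\<lambda>t::real. p + t *\<^sub>R k) has_derivative (\<lambda>t. t *\<^sub>R k)) (at 0)"
    by (auto intro!: derivative_eq_intros)
  from has_derivative_compose[OF this] assms(1)
  have "((\<lambda>t::real. f (p + t *\<^sub>R k)) has_derivative (\<lambda>t. ?D (t *\<^sub>R k))) (at 0)"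
    by (simp add: frechet_derivative_works)
  moreover have "((\<lambda>t::real. f (p + t *\<^sub>R k)) has_derivative (\<lambda>t. 0)) (at 0)"
    using assms(2) by simp
  ultimately have "(\<lambda>t. ?D (t *\<^sub>R k)) = (\<lambda>t. 0)" by (rule has_derivative_unique)
  then show ?thesis by (metis scaleR_one)
qed

section \<open>The Killing potential of the orthotoric structure\<close>

lemma fq_orthotoric [simp]: "fq 1 0 0 x1 x2 = 1"
  by (simp add: fq_def)

definition fq_deriv :: "real \<Rightarrow> real \<Rightarrow> real^5 \<Rightarrow> real^5 \<Rightarrow> real" where
  "fq_deriv q1 q2 p v = q1 * (v$1 + v$2) + q2 * (v$1 * p$2 + p$1 * v$2)"

lemma fq_has_derivative:
  "((\<lambda>p::real^5. fq q0 q1 q2 (p$1) (p$2)) has_derivative fq_deriv q1 q2 p) (at p)"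
  unfolding fq_def fq_deriv_def[abs_def]
  by (auto intro!: derivative_eq_intros simp: algebra_simps)

definition theta_orth :: "real^5 \<Rightarrow> real^5 \<Rightarrow> real" where
  "theta_orth x w = (x$1 + x$2) * w$3 + 2 * (x$1 * x$2) * w$4"

definition theta_orth_deriv :: "real^5 \<Rightarrow> real^5 \<Rightarrow> real^5 \<Rightarrow> real" where
  "theta_orth_deriv x w v = (v$1 + v$2) * w$3 + 2 * (v$1 * x$2 + x$1 * v$2) * w$4"

lemma theta_orth_has_derivative:
  "((\<lambda>x. theta_orth x w) has_derivative theta_orth_deriv x w) (at x)"
  unfolding theta_orth_def theta_orth_deriv_def[abs_def]
  by (auto intro!: derivative_eq_intros simp: algebra_simps)

lemma d1form_theta_orth:
  "d1form theta_orth x v w = theta_orth_deriv x w v - theta_orth_deriv x v w"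
  using theta_orth_has_derivative by (rule d1form_eq_derivatives)

lemma omega_orth_eq_d1form_theta_orth:
  assumes "x$1 \<noteq> x$2" "tang 1 0 0 v" "tang 1 0 0 w"
  shows "omega_amb 1 0 0 x v w = d1form theta_orth x v w"
proof -
  have "(x$1 - x$2) * alpha1 1 0 0 x u = u$3 + 2 * x$2 * u$4 + (x$2)^2 * u$5"
    and "(x$1 - x$2) * alpha2 1 0 0 x u = u$3 + 2 * x$1 * u$4 + (x$1)^2 * u$5" for u
    using assms(1) unfolding alpha1_def alpha2_def fq_def by simp_all
  then show ?thesis
    using assms(2,3)
    unfolding omega_amb_def wedge_def d1form_theta_orth theta_orth_deriv_def fq_def
    by (simp add: algebra_simps)
qed

definition killing_field :: "real \<Rightarrow> real \<Rightarrow> real^5" where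
  "killing_field q1 q2 = q1 *\<^sub>R axis 3 1 + (q2/2) *\<^sub>R axis 4 1"

lemma killing_field_nth [simp]:
  "killing_field q1 q2 $ 1 = 0" "killing_field q1 q2 $ 2 = 0" "killing_field q1 q2 $ 3 = q1"
  "killing_field q1 q2 $ 4 = q2/2" "killing_field q1 q2 $ 5 = 0"
  by (simp_all add: killing_field_def axis_def)

lemma fq_deriv_killing_field [simp]: "fq_deriv q1 q2 x (killing_field q1 q2) = 0"
  by (simp add: fq_deriv_def)

lemma d1form_theta_orth_killing_field:
  "d1form theta_orth x (killing_field q1 q2) w = - fq_deriv q1 q2 x w"
  by (simp add: d1form_theta_orth theta_orth_deriv_def fq_deriv_def algebra_simps)

lemma g_orth_differentiable:
  assumes A: "\<forall>x. A x > 0 \<longrightarrow> A differentiable (at x)"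
    and B: "\<forall>x. B x > 0 \<longrightarrow> B differentiable (at x)"
    and p: "amb_dom 1 0 0 A B p"
  shows "(\<lambda>x. g_amb 1 0 0 A B x v w) differentiable (at p)"
proof -
  have nth: "(\<lambda>x::real^5. x$i) differentiable (at p)" for i
    by (rule bounded_linear_imp_differentiable[OF bounded_linear_vec_nth])
  have "(\<lambda>x. A (x$1)) differentiable (at p)" "(\<lambda>x. B (x$2)) differentiable (at p)"
    using p A B nth by (auto simp: amb_dom_def intro: differentiable_compose)
  moreover have "A (p$1) \<noteq> 0" "B (p$2) \<noteq> 0" "p$1 \<noteq> p$2"
    using p by (auto simp: amb_dom_def)
  ultimately show ?thesis
    unfolding g_amb_def alpha1_def alpha2_def fq_def
    by (intro derivative_intros nth) simp_all
qed

lemma g_orth_translation_invariant: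
  "g_amb 1 0 0 A B (x + t *\<^sub>R killing_field q1 q2) v w = g_amb 1 0 0 A B x v w"
  by (simp add: g_amb_def alpha1_def alpha2_def)

lemma killing_potential_fq:
  assumes A: "\<forall>x. A x > 0 \<longrightarrow> A differentiable (at x)"
    and B: "\<forall>x. B x > 0 \<longrightarrow> B differentiable (at x)"
  shows "killing_potential (tang 1 0 0) {p. amb_dom 1 0 0 A B p} (omega_amb 1 0 0) (g_amb 1 0 0 A B)
           (\<lambda>p. fq q0 q1 q2 (p$1) (p$2))"
  unfolding killing_potential_def
proof (intro exI[of _ "\<lambda>_. killing_field q1 q2"] ballI conjI allI impI)
  fix p v w assume "p \<in> {p. amb_dom 1 0 0 A B p}"
  then have p: "amb_dom 1 0 0 A B p" by simp
  have frechet_fq: "frechet_derivative (\<lambda>p. fq q0 q1 q2 (p$1) (p$2)) (at p) = fq_deriv q1 q2 p"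
    using fq_has_derivative by (rule frechet_derivative_at[symmetric])
  show "tang 1 0 0 (killing_field q1 q2)" by simp
  show "(\<lambda>p. fq q0 q1 q2 (p$1) (p$2)) differentiable (at p)"
    using fq_has_derivative differentiable_def by blast
  show "(\<lambda>p. killing_field q1 q2) differentiable (at p)" by simp
  show g_diff: "(\<lambda>x. g_amb 1 0 0 A B x v w) differentiable (at p)" for v w
    using A B p by (rule g_orth_differentiable)
  show "omega_amb 1 0 0 p (killing_field q1 q2) w = - frechet_derivative (\<lambda>p. fq q0 q1 q2 (p$1) (p$2)) (at p) w"
    if "tang 1 0 0 w"
    using p that
    by (simp add: amb_dom_def omega_orth_eq_d1form_theta_orth d1form_theta_orth_killing_field frechet_fq)
  have "frechet_derivative (\<lambda>x. g_amb 1 0 0 A B x v w) (at p) (killing_field q1 q2) = 0"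
    using g_diff g_orth_translation_invariant by (rule frechet_derivative_translation_invariant)
  moreover have "frechet_derivative (\<lambda>p. killing_field q1 q2) (at p) = (\<lambda>_. 0)"
    by (rule frechet_derivative_const)
  ultimately show "lie2 (g_amb 1 0 0 A B) (\<lambda>p. killing_field q1 q2) p v w = 0"
    by (simp add: lie2_def g_amb_def alpha1_def alpha2_def)
qed

section \<open>The twist map\<close>

definition twist_linear :: "real \<Rightarrow> real \<Rightarrow> real \<Rightarrow> (real^5) \<times> real \<Rightarrow> real^5" where
  "twist_linear q0 q1 q2 v =
     ((fst v)$1) *\<^sub>R axis 1 1 + ((fst v)$2) *\<^sub>R axis 2 1 + (q0 * (fst v)$3 - q1 * snd v) *\<^sub>R axis 3 1
     + (q0 * (fst v)$4 - q2/2 * snd v) *\<^sub>R axis 4 1 + (2 * q1 * (fst v)$4 - q2 * (fst v)$3) *\<^sub>R axis 5 1"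

definition twist_map :: "real \<Rightarrow> real \<Rightarrow> real \<Rightarrow> real^5 \<Rightarrow> (real^5) \<times> real \<Rightarrow> real^5" where
  "twist_map q0 q1 q2 p0 y =
     twist_linear q0 q1 q2 y + (p0$3 *\<^sub>R axis 3 1 + p0$4 *\<^sub>R axis 4 1 + p0$5 *\<^sub>R axis 5 1)"

definition reeb_field :: "real \<Rightarrow> real \<Rightarrow> real \<Rightarrow> (real^5) \<times> real" where
  "reeb_field q0 q1 q2 = (killing_field q1 q2, q0)"

lemma reeb_field_simps [simp]:
  "fst (reeb_field q0 q1 q2) = killing_field q1 q2" "snd (reeb_field q0 q1 q2) = q0"
  by (simp_all add: reeb_field_def)

lemma twist_linear_nth [simp]:
  "twist_linear q0 q1 q2 v $ 1 = (fst v)$1" "twist_linear q0 q1 q2 v $ 2 = (fst v)$2"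
  "twist_linear q0 q1 q2 v $ 3 = q0 * (fst v)$3 - q1 * snd v"
  "twist_linear q0 q1 q2 v $ 4 = q0 * (fst v)$4 - q2/2 * snd v"
  "twist_linear q0 q1 q2 v $ 5 = 2 * q1 * (fst v)$4 - q2 * (fst v)$3"
  by (simp_all add: twist_linear_def axis_def)

lemma twist_map_nth [simp]:
  "twist_map q0 q1 q2 p0 y $ 1 = (fst y)$1" "twist_map q0 q1 q2 p0 y $ 2 = (fst y)$2"
  "twist_map q0 q1 q2 p0 y $ 3 = q0 * (fst y)$3 - q1 * snd y + p0$3"
  "twist_map q0 q1 q2 p0 y $ 4 = q0 * (fst y)$4 - q2/2 * snd y + p0$4"
  "twist_map q0 q1 q2 p0 y $ 5 = 2 * q1 * (fst y)$4 - q2 * (fst y)$3 + p0$5"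
  by (simp_all add: twist_map_def axis_def)

lemma linear_twist_linear: "linear (twist_linear q0 q1 q2)"
  by (rule linearI) (simp_all add: vec5_eq_iff algebra_simps)

lemma twist_map_has_derivative:
  "(twist_map q0 q1 q2 p0 has_derivative twist_linear q0 q1 q2) (at y)"
proof -
  have "bounded_linear (twist_linear q0 q1 q2)"
    using linear_twist_linear by (simp add: linear_conv_bounded_linear)
  from has_derivative_add[OF bounded_linear.has_derivative[OF this has_derivative_ident] has_derivative_const]
  show ?thesis unfolding twist_map_def[abs_def] by simp
qed

lemma twist_linear_tang: "tang q0 q1 q2 (twist_linear q0 q1 q2 v)"
  by (simp add: tang_def algebra_simps)

lemma parallel_if_cross_eq_0:
  fixes a b c x y z :: real
  assumes "\<not> (a = 0 \<and> b = 0 \<and> c = 0)" "b * z = c * y" "c * x = a * z" "a * y = b * x"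
  shows "\<exists>t. x = t * a \<and> y = t * b \<and> z = t * c"
proof -
  define n where "n = a^2 + b^2 + c^2"
  have "n \<noteq> 0" using assms(1) unfolding n_def by (auto simp: add_nonneg_eq_0_iff)
  have "n * x = (a * x + b * y + c * z) * a" "n * y = (a * x + b * y + c * z) * b"
    "n * z = (a * x + b * y + c * z) * c"
    unfolding n_def using assms(2-4) by algebra+
  with \<open>n \<noteq> 0\<close> have "x = (a * x + b * y + c * z) / n * a" "y = (a * x + b * y + c * z) / n * b"
    "z = (a * x + b * y + c * z) / n * c"
    by (simp_all add: field_simps)
  then show ?thesis by blast
qed

lemma twist_linear_eq_0_iff:
  assumes q: "\<not> (q0 = 0 \<and> q1 = 0 \<and> q2 = 0)" and v: "tang 1 0 0 (fst v)"
  shows "twist_linear q0 q1 q2 v = 0 \<longleftrightarrow> (\<exists>t. v = t *\<^sub>R reeb_field q0 q1 q2)"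
proof
  assume "\<exists>t. v = t *\<^sub>R reeb_field q0 q1 q2"
  then show "twist_linear q0 q1 q2 v = 0"
    by (auto simp: vec5_eq_iff)
next
  assume "twist_linear q0 q1 q2 v = 0"
  then have "twist_linear q0 q1 q2 v $ i = 0" for i by simp
  from this[of 1] this[of 2] this[of 3] this[of 4] this[of 5]
  have h: "(fst v)$1 = 0" "(fst v)$2 = 0" "q0 * (fst v)$3 = q1 * snd v"
    "q2/2 * snd v = q0 * (fst v)$4" "q1 * (fst v)$4 = q2/2 * (fst v)$3"
    by simp_all
  from q have "\<not> (q1 = 0 \<and> q2/2 = 0 \<and> q0 = 0)" by auto
  from parallel_if_cross_eq_0[OF this h(4,3,5)] obtain t
    where "(fst v)$3 = t * q1" "(fst v)$4 = t * (q2/2)" "snd v = t * q0" by blast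
  with h(1,2) v have "v = t *\<^sub>R reeb_field q0 q1 q2"
    by (simp add: prod_eq_iff vec5_eq_iff)
  then show "\<exists>t. v = t *\<^sub>R reeb_field q0 q1 q2" ..
qed

lemma twist_linear_onto:
  assumes q: "\<not> (q0 = 0 \<and> q1 = 0 \<and> q2 = 0)" and u: "tang q0 q1 q2 u"
  shows "\<exists>v. tang 1 0 0 (fst v) \<and> twist_linear q0 q1 q2 v = u"
proof -
  define n where "n = 4 * q0^2 + 4 * q1^2 + q2^2"
  have "n \<noteq> 0" using q unfolding n_def by (auto simp: add_nonneg_eq_0_iff)
  define v :: "real^5" where "v = (n * u$1) *\<^sub>R axis 1 1 + (n * u$2) *\<^sub>R axis 2 1
    + (4 * q0 * u$3 - q2 * u$5) *\<^sub>R axis 3 1 + (4 * q0 * u$4 + 2 * q1 * u$5) *\<^sub>R axis 4 1"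
  define s where "s = - 4 * q1 * u$3 - 2 * q2 * u$4"
  have "2 * q1 * u$4 = q0 * u$5 + q2 * u$3" using u by (simp add: tang_def)
  then have "q0 * (4 * q0 * u$3 - q2 * u$5) - q1 * s = n * u$3"
    "q0 * (4 * q0 * u$4 + 2 * q1 * u$5) - q2/2 * s = n * u$4"
    "2 * q1 * (4 * q0 * u$4 + 2 * q1 * u$5) - q2 * (4 * q0 * u$3 - q2 * u$5) = n * u$5"
    unfolding n_def s_def by algebra+
  then have "twist_linear q0 q1 q2 (v, s) = n *\<^sub>R u"
    by (simp add: vec5_eq_iff v_def axis_def)
  then have "twist_linear q0 q1 q2 ((1/n) *\<^sub>R (v, s)) = (1/n) *\<^sub>R (n *\<^sub>R u)"
    by (simp only: linear_cmul[OF linear_twist_linear])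
  also have "\<dots> = u" using \<open>n \<noteq> 0\<close> by simp
  finally have "twist_linear q0 q1 q2 ((1/n) *\<^sub>R (v, s)) = u" .
  moreover have "tang 1 0 0 (fst ((1/n) *\<^sub>R (v, s)))"
    by (simp add: v_def axis_def)
  ultimately show ?thesis by blast
qed

lemma alpha_twist:
  assumes F: "fq q0 q1 q2 ((fst y)$1) ((fst y)$2) \<noteq> 0"
    and horizontal: "snd v + theta_orth (fst y) (fst v) = 0" and v: "tang 1 0 0 (fst v)"
  shows "alpha1 q0 q1 q2 (twist_map q0 q1 q2 p0 y) (twist_linear q0 q1 q2 v) = alpha1 1 0 0 (fst y) (fst v)"
    and "alpha2 q0 q1 q2 (twist_map q0 q1 q2 p0 y) (twist_linear q0 q1 q2 v) = alpha2 1 0 0 (fst y) (fst v)"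
proof -
  let ?F = "fq q0 q1 q2 ((fst y)$1) ((fst y)$2)" and ?u = "twist_linear q0 q1 q2 v"
  have s: "snd v = - theta_orth (fst y) (fst v)" using horizontal by simp
  \<comment> \<open>on ker eta the numerators of alpha_i acquire the factor f_q of their denominators\<close>
  have "?u$3 + 2 * (fst y)$2 * ?u$4 + ((fst y)$2)^2 * ?u$5 = ?F * ((fst v)$3 + 2 * (fst y)$2 * (fst v)$4)"
    and "?u$3 + 2 * (fst y)$1 * ?u$4 + ((fst y)$1)^2 * ?u$5 = ?F * ((fst v)$3 + 2 * (fst y)$1 * (fst v)$4)"
    unfolding twist_linear_nth s theta_orth_def fq_def by (simp_all add: algebra_simps power2_eq_square)
  with F v show "alpha1 q0 q1 q2 (twist_map q0 q1 q2 p0 y) ?u = alpha1 1 0 0 (fst y) (fst v)"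
    and "alpha2 q0 q1 q2 (twist_map q0 q1 q2 p0 y) ?u = alpha2 1 0 0 (fst y) (fst v)"
    unfolding alpha1_def alpha2_def by (simp_all add: fq_def)
qed

lemma omega_twist:
  assumes F: "fq q0 q1 q2 ((fst y)$1) ((fst y)$2) \<noteq> 0"
    and "snd v + theta_orth (fst y) (fst v) = 0" "tang 1 0 0 (fst v)"
    and "snd w + theta_orth (fst y) (fst w) = 0" "tang 1 0 0 (fst w)"
  shows "omega_amb q0 q1 q2 (twist_map q0 q1 q2 p0 y) (twist_linear q0 q1 q2 v) (twist_linear q0 q1 q2 w)
     = omega_amb 1 0 0 (fst y) (fst v) (fst w) / fq q0 q1 q2 ((fst y)$1) ((fst y)$2)"
  using alpha_twist[OF F assms(2,3)] alpha_twist[OF F assms(4,5)]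
  unfolding omega_amb_def wedge_def by (simp add: fq_def)

lemma J_twist:
  assumes F: "fq q0 q1 q2 ((fst y)$1) ((fst y)$2) \<noteq> 0"
    and "snd v + theta_orth (fst y) (fst v) = 0" "tang 1 0 0 (fst v)"
    and "snd w + theta_orth (fst y) (fst w) = 0" "tang 1 0 0 (fst w)"
    and J: "J_amb 1 0 0 A B (fst y) (fst v) (fst w)"
  shows "J_amb q0 q1 q2 A B (twist_map q0 q1 q2 p0 y) (twist_linear q0 q1 q2 v) (twist_linear q0 q1 q2 w)"
  using alpha_twist[OF F assms(2,3)] alpha_twist[OF F assms(4,5)] J
  by (simp add: J_amb_def twist_linear_tang)

lemma d1form_contact_divide_fq:
  assumes F: "fq q0 q1 q2 ((fst y)$1) ((fst y)$2) \<noteq> 0"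
  shows "d1form (\<lambda>z u. (snd u + theta_orth (fst z) (fst u)) / fq q0 q1 q2 ((fst z)$1) ((fst z)$2)) y v w
    = (d1form theta_orth (fst y) (fst v) (fst w) * fq q0 q1 q2 ((fst y)$1) ((fst y)$2)
       - (snd w + theta_orth (fst y) (fst w)) * fq_deriv q1 q2 (fst y) (fst v)
       + (snd v + theta_orth (fst y) (fst v)) * fq_deriv q1 q2 (fst y) (fst w))
      / (fq q0 q1 q2 ((fst y)$1) ((fst y)$2))^2"
proof -
  have fst: "(fst has_derivative fst) (at y)"
    by (rule has_derivative_fst[OF has_derivative_ident])
  have "((\<lambda>z. theta_orth (fst z) (fst u)) has_derivative (\<lambda>h. theta_orth_deriv (fst y) (fst u) (fst h))) (at y)"
    for u using has_derivative_compose[OF fst theta_orth_has_derivative] .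
  from has_derivative_add[OF has_derivative_const this]
  have contact: "((\<lambda>z. snd u + theta_orth (fst z) (fst u))
      has_derivative (\<lambda>h. theta_orth_deriv (fst y) (fst u) (fst h))) (at y)" for u
    by simp
  have fq: "((\<lambda>z. fq q0 q1 q2 ((fst z)$1) ((fst z)$2)) has_derivative (\<lambda>h. fq_deriv q1 q2 (fst y) (fst h))) (at y)"
    using has_derivative_compose[OF fst fq_has_derivative] .
  have "d1form (\<lambda>z u. snd u + theta_orth (fst z) (fst u)) y v w = d1form theta_orth (fst y) (fst v) (fst w)"
    using d1form_eq_derivatives[OF contact] by (simp add: d1form_theta_orth)
  with d1form_divide[where \<eta> = "\<lambda>z u. snd u + theta_orth (fst z) (fst u)", OF contact fq F]
  show ?thesis by simp
qed

lemma contact_killing_field: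
  "q0 + theta_orth x (killing_field q1 q2) = fq q0 q1 q2 (x$1) (x$2)"
  by (simp add: theta_orth_def fq_def algebra_simps)

lemma d1form_contact_divide_fq_reeb_field:
  assumes F: "fq q0 q1 q2 ((fst y)$1) ((fst y)$2) \<noteq> 0"
  shows "d1form (\<lambda>z u. (snd u + theta_orth (fst z) (fst u)) / fq q0 q1 q2 ((fst z)$1) ((fst z)$2))
           y (reeb_field q0 q1 q2) w = 0"
  using d1form_contact_divide_fq[OF F]
  by (simp add: contact_killing_field d1form_theta_orth_killing_field)

lemma cr_twist_fq:
  assumes p0: "amb_dom q0 q1 q2 A B p0"
  shows "cr_twist_at (amb_dom 1 0 0 A B) (tang 1 0 0) (omega_amb 1 0 0) (J_amb 1 0 0 A B)
           (\<lambda>p. fq q0 q1 q2 (p$1) (p$2))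
           (amb_dom q0 q1 q2 A B) (tang q0 q1 q2) (omega_amb q0 q1 q2) (J_amb q0 q1 q2 A B) p0"
  unfolding cr_twist_at_def Let_def
proof (intro exI[of _ theta_orth] exI[of _ "{y. 0 < fq q0 q1 q2 ((fst y)$1) ((fst y)$2)}"]
    exI[of _ "twist_map q0 q1 q2 p0"] exI[of _ "\<lambda>_. twist_linear q0 q1 q2"] conjI ballI)
  show "open {y :: (real^5) \<times> real. 0 < fq q0 q1 q2 ((fst y)$1) ((fst y)$2)}"
    unfolding fq_def by (intro open_Collect_less continuous_intros)
  let ?y0 = "(p0$1 *\<^sub>R axis 1 1 + p0$2 *\<^sub>R axis 2 1, 0) :: (real^5) \<times> real"
  have "?y0 \<in> {y \<in> {y. 0 < fq q0 q1 q2 ((fst y)$1) ((fst y)$2)}. amb_dom 1 0 0 A B (fst y)}"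
    using p0 by (simp add: amb_dom_def axis_def)
  moreover have "twist_map q0 q1 q2 p0 ?y0 = p0"
    by (simp add: vec5_eq_iff axis_def)
  ultimately show "p0 \<in> twist_map q0 q1 q2 p0 `
      {y \<in> {y. 0 < fq q0 q1 q2 ((fst y)$1) ((fst y)$2)}. amb_dom 1 0 0 A B (fst y)}"
    by (rule rev_image_eqI[OF _ sym])
  have q: "\<not> (q0 = 0 \<and> q1 = 0 \<and> q2 = 0)" using p0 by (auto simp: amb_dom_def fq_def)
  fix y :: "(real^5) \<times> real"
  assume "y \<in> {y \<in> {y. 0 < fq q0 q1 q2 ((fst y)$1) ((fst y)$2)}. amb_dom 1 0 0 A B (fst y)}"
  then have pos: "0 < fq q0 q1 q2 ((fst y)$1) ((fst y)$2)" and y: "amb_dom 1 0 0 A B (fst y)"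
    by auto
  then have F: "fq q0 q1 q2 ((fst y)$1) ((fst y)$2) \<noteq> 0" and d: "(fst y)$1 \<noteq> (fst y)$2"
    by (auto simp: amb_dom_def)
  show "0 < fq q0 q1 q2 ((fst y)$1) ((fst y)$2)" by (fact pos)
  show "(\<lambda>p. fq q0 q1 q2 (p$1) (p$2)) differentiable (at (fst y))"
    using fq_has_derivative by (rule differentiableI)
  show "linear (theta_orth (fst y))"
    unfolding theta_orth_def by (rule linearI) (simp_all add: algebra_simps)
  show "\<forall>w. (\<lambda>x. theta_orth x w) differentiable (at (fst y))"
    using theta_orth_has_derivative by (blast intro: differentiableI)
  show "\<forall>v w. tang 1 0 0 v \<longrightarrow> tang 1 0 0 w \<longrightarrow> d1form theta_orth (fst y) v w = omega_amb 1 0 0 (fst y) v w"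
    using d by (simp add: omega_orth_eq_d1form_theta_orth)
  show "amb_dom q0 q1 q2 A B (twist_map q0 q1 q2 p0 y)"
    using p0 y pos by (simp add: amb_dom_def tang_def algebra_simps)
  show "(twist_map q0 q1 q2 p0 has_derivative twist_linear q0 q1 q2) (at y)"
    by (rule twist_map_has_derivative)
  show "\<forall>v. tang 1 0 0 (fst v) \<longrightarrow> tang q0 q1 q2 (twist_linear q0 q1 q2 v)"
    by (simp add: twist_linear_tang)
  show "\<forall>u. tang q0 q1 q2 u \<longrightarrow> (\<exists>v. tang 1 0 0 (fst v) \<and> twist_linear q0 q1 q2 v = u)"
    using q by (blast intro: twist_linear_onto)
  let ?\<beta> = "\<lambda>y v. (snd v + theta_orth (fst y) (fst v)) / fq q0 q1 q2 ((fst y)$1) ((fst y)$2)"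
  show "\<exists>xi. tang 1 0 0 (fst xi) \<and> ?\<beta> y xi = 1
      \<and> (\<forall>w. tang 1 0 0 (fst w) \<longrightarrow> d1form ?\<beta> y xi w = 0)
      \<and> (\<forall>v. tang 1 0 0 (fst v) \<longrightarrow> (twist_linear q0 q1 q2 v = 0) = (\<exists>c. v = c *\<^sub>R xi))"
    using F q
    by (intro exI[of _ "reeb_field q0 q1 q2"])
      (simp add: contact_killing_field d1form_contact_divide_fq_reeb_field twist_linear_eq_0_iff)
  show "\<forall>v w. tang 1 0 0 (fst v) \<and> snd v + theta_orth (fst y) (fst v) = 0 \<longrightarrow>
      tang 1 0 0 (fst w) \<and> snd w + theta_orth (fst y) (fst w) = 0 \<longrightarrow>
      d1form ?\<beta> y v w
        = omega_amb q0 q1 q2 (twist_map q0 q1 q2 p0 y) (twist_linear q0 q1 q2 v) (twist_linear q0 q1 q2 w)"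
    using F d
    by (simp add: d1form_contact_divide_fq omega_twist omega_orth_eq_d1form_theta_orth power2_eq_square)
  show "\<forall>v w. tang 1 0 0 (fst v) \<and> snd v + theta_orth (fst y) (fst v) = 0 \<longrightarrow>
      tang 1 0 0 (fst w) \<and> snd w + theta_orth (fst y) (fst w) = 0 \<longrightarrow>
      J_amb 1 0 0 A B (fst y) (fst v) (fst w) \<longrightarrow>
      J_amb q0 q1 q2 A B (twist_map q0 q1 q2 p0 y) (twist_linear q0 q1 q2 v) (twist_linear q0 q1 q2 w)"
    using F by (blast intro: J_twist)
qed

theorem corollary4:
  fixes q0 q1 q2 :: real and A B :: "real \<Rightarrow> real"
  assumes "\<forall>x. A x > 0 \<longrightarrow> A differentiable (at x)"
      and "\<forall>x. B x > 0 \<longrightarrow> B differentiable (at x)"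
  shows "killing_potential (tang 1 0 0) {p. amb_dom 1 0 0 A B p} (omega_amb 1 0 0) (g_amb 1 0 0 A B)
            (\<lambda>p. fq q0 q1 q2 (p$1) (p$2))
       \<and> (\<forall>p0. amb_dom q0 q1 q2 A B p0 \<longrightarrow>
            cr_twist_at (amb_dom 1 0 0 A B) (tang 1 0 0) (omega_amb 1 0 0) (J_amb 1 0 0 A B)
              (\<lambda>p. fq q0 q1 q2 (p$1) (p$2))
              (amb_dom q0 q1 q2 A B) (tang q0 q1 q2) (omega_amb q0 q1 q2) (J_amb q0 q1 q2 A B) p0)"
  using killing_potential_fq[OF assms] cr_twist_fq by blast

end
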